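(* Fix $d\ge1$, $\alpha>0$, $M,\tilde M>0$ with $M/\tilde M\ge(1-5^{-\alpha})^{-1}\bigl(1+\frac{1}{5^\alpha-3^\alpha}\bigr)80^\alpha$, and $\sigma^2\ge0$. For each budget $n$ let $\mathcal{C}_{\alpha,2}$ be the class of CSO problems constructed below. For any admissible algorithm there exists a constant $b_3$ such that for all $n\ge b_3$, $$\sup_{\mathcal{CSO}\in\mathcal{C}_{\alpha,2}}\mathbb{E}_{\mathcal{CSO}}\bigl[y(\mathbf{x}^* )-y(\hat{\mathbf{x}}_n^* )\bigr]\ge b_4\exp(-b_5 n),$$ where $b_4,b_5$ are positive constants independent of $n$ and $\sigma^2$.
   Context: $\|\mathbf{x}\|_\infty=\max_l|x_l|$. Let $\Delta=\lfloor 3^d/2\rfloor$, $\bar a=\lceil 4(n+1)/\Delta\rceil+2$, $\gamma_a=5^{-a}/2$, $\hat M=\frac{40^\alpha}{5^\alpha-3^\alpha}\tilde M$. For $a=0,\dots,\bar a$ and $\boldsymbol\kappa_a\in\{1,\dots,5^a\}^d$ let $\mathbf{c}_{\boldsymbol\kappa_a,a}=((2\kappa_{1,a}-1)\gamma_a,\dots,(2\kappa_{d,a}-1)\gamma_a)$ and $\mathcal Z_{\boldsymbol\kappa_a,a}=\{\mathbf{x}\in[0,1]^d:\|\mathbf{x}-\mathbf{c}_{\boldsymbol\kappa_a,a}\|_\infty<\gamma_a\}$. For $a\ge1$, $\mathcal P(\boldsymbol\kappa_a)$ is the level-$(a-1)$ index with $\mathcal Z_{\boldsymbol\kappa_a,a}\subset\mathcal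 Z_{\mathcal P(\boldsymbol\kappa_a),a-1}$, and $\mathcal P^\ell$ its $\ell$-fold iterate. Let $\mathcal U_0=\{\mathcal Z_{\mathbf 1,0}\}$ and for $a\ge1$, $\mathcal U_a=\{\mathcal Z_{\boldsymbol\kappa_a,a}:\mathcal Z_{\mathcal P(\boldsymbol\kappa_a),a-1}\in\mathcal U_{a-1},\ \|\mathbf{c}_{\boldsymbol\kappa_a,a}-\mathbf{c}_{\mathcal P(\boldsymbol\kappa_a),a-1}\|_\infty\le2\gamma_a\}$. Component functions on $[0,1]^d$: $y_{\mathcal S}(\mathbf{x}\mid\mathbf 1,0)=\hat M(5^\alpha-3^\alpha)\gamma_1^\alpha$ if $\|\mathbf{x}-\mathbf{c}_{\mathbf 1,0}\|_\infty\le3\gamma_1$ and $=\hat M5^\alpha\gamma_1^\alpha-\hat M\|\mathbf{x}-\mathbf{c}_{\mathbf 1,0}\|_\infty^\alpha$ if $3\gamma_1\le\|\mathbf{x}-\mathbf{c}_{\mathbf 1,0}\|_\infty\le5\gamma_1$; for $1\le a\le\bar a-1$ and $\mathcal Z_{\boldsymbol\kappa_a,a}\in\mathcal U_a$, $y_{\mathcal S}(\mathbf{x}\mid\boldsymbol\kappa_a,a)=\hat M(5^\alpha-3^\alpha)\gamma_{a+1}^\alpha$ if $\|\mathbf{x}-\mathbf{c}_{\boldsymbol\kappa_a,a}\|_\infty\le3\gamma_{a+1}$, $=\hat M5^\alpha\gamma_{a+1}^\alpha-\hat M\|\mathbf{x}-\mathbf{c}_{\boldsymbol\kappa_a,a}\|_\infty^\alpha$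 if $3\gamma_{a+1}<\|\cdot\|_\infty\le5\gamma_{a+1}$, $=0$ otherwise; for $\mathcal Z_{\boldsymbol\kappa_{\bar a},\bar a}\in\mathcal U_{\bar a}$, $y_{\mathcal D}(\mathbf{x}\mid\boldsymbol\kappa_{\bar a},\bar a)=\hat M\gamma_{\bar a}^\alpha-\hat M\|\mathbf{x}-\mathbf{c}_{\boldsymbol\kappa_{\bar a},\bar a}\|_\infty^\alpha$ if $\|\mathbf{x}-\mathbf{c}_{\boldsymbol\kappa_{\bar a},\bar a}\|_\infty\le\gamma_{\bar a}$, $=0$ otherwise. Set $y_{\mathcal C}(\mathbf{x}\mid\boldsymbol\kappa_{\bar a},\bar a)=y_{\mathcal D}(\mathbf{x}\mid\boldsymbol\kappa_{\bar a},\bar a)+\sum_{\ell=1}^{\bar a-1}y_{\mathcal S}(\mathbf{x}\mid\mathcal P^\ell(\boldsymbol\kappa_{\bar a}),\bar a-\ell)+y_{\mathcal S}(\mathbf{x}\mid\mathbf 1,0)$. $\mathcal C_{\alpha,2}$ is the set of problems, one for each $\mathcal Z_{\boldsymbol\kappa_{\bar a},\bar a}\in\mathcal U_{\bar a}$, of maximizing $y=y_{\mathcal C}(\cdot\mid\boldsymbol\kappa_{\bar a},\bar a)$ over $[0,1]^d$ where each query at $\mathbf{x}$ returns $y(\mathbf{x})+\varepsilon$, $\varepsilon\sim N(0,\sigma^2)$ independent of everything else; $\mathbf{x}^*$ is the maximizer of $y$. Admissible algorithm with budget $n$: (i) $\mathbf{x}_1$ deterministic or a measurable function of a random vector $U_1$;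 (ii) $\mathbf{x}_{t+1}$ a measurable function of $\mathbf{x}_1,Y(\mathbf{x}_1),\dots,\mathbf{x}_t,Y(\mathbf{x}_t)$ and a random vector $U_{t+1}$; (iii) output $\hat{\mathbf{x}}_n^*$ a measurable function of the full history and a random vector $U_n^*$; (iv) $\hat{\mathbf{x}}_n^*\in\{\mathbf{x}_1,\dots,\mathbf{x}_n\}$; the $U$'s are independent and independent of the noise. "Algorithm" means such a rule for each $n$. *)

theory Defs
  imports "HOL-Probability.Probability"
begin

text \<open>Points of [0,1]^d are vectors of type real^'d with d = CARD('d).
  The sup-norm is the library's infnorm (= max of absolute coordinates).\<close>

definition unit_cube :: "(real^'d) set" where
  "unit_cube = {x. \<forall>i. 0 \<le> x $ i \<and> x $ i \<le> 1}"

definition Delta :: "nat \<Rightarrow> nat" where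
  "Delta d = 3 ^ d div 2"

definition abar :: "nat \<Rightarrow> nat \<Rightarrow> nat" where
  "abar d n = nat \<lceil>4 * (real n + 1) / real (Delta d)\<rceil> + 2"

definition gamma :: "nat \<Rightarrow> real" where
  "gamma a = 1 / (2 * 5 ^ a)"

definition Mhat :: "real \<Rightarrow> real \<Rightarrow> real" where
  "Mhat \<alpha> Mt = 40 powr \<alpha> / (5 powr \<alpha> - 3 powr \<alpha>) * Mt"

definition idx :: "nat \<Rightarrow> ('d::finite \<Rightarrow> nat) set" where
  "idx a = {\<kappa>. \<forall>i. 1 \<le> \<kappa> i \<and> \<kappa> i \<le> 5 ^ a}"

definition center :: "('d::finite \<Rightarrow> nat) \<Rightarrow> nat \<Rightarrow> real^'d" where
  "center \<kappa> a = (\<chi> i. (2 * real (\<kappa> i) - 1) * gamma a)"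

definition cell :: "('d::finite \<Rightarrow> nat) \<Rightarrow> nat \<Rightarrow> (real^'d) set" where
  "cell \<kappa> a = {x \<in> unit_cube. infnorm (x - center \<kappa> a) < gamma a}"

definition parent :: "('d::finite \<Rightarrow> nat) \<Rightarrow> nat \<Rightarrow> ('d \<Rightarrow> nat)" where
  "parent \<kappa> a = (THE \<kappa>'. \<kappa>' \<in> idx (a - 1) \<and> cell \<kappa> a \<subseteq> cell \<kappa>' (a - 1))"

fun piter :: "nat \<Rightarrow> ('d::finite \<Rightarrow> nat) \<Rightarrow> nat \<Rightarrow> ('d \<Rightarrow> nat)" where
  "piter 0 \<kappa> a = \<kappa>"
| "piter (Suc l) \<kappa> a = parent (piter l \<kappa> a) (a - l)"

fun Uidx :: "nat \<Rightarrow> ('d::finite \<Rightarrow> nat) set" where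
  "Uidx 0 = {\<lambda>_. 1}"
| "Uidx (Suc a) = {\<kappa> \<in> idx (Suc a). parent \<kappa> (Suc a) \<in> Uidx a \<and>
      infnorm (center \<kappa> (Suc a) - center (parent \<kappa> (Suc a)) a) \<le> 2 * gamma (Suc a)}"

definition yS :: "real \<Rightarrow> real \<Rightarrow> ('d::finite \<Rightarrow> nat) \<Rightarrow> nat \<Rightarrow> real^'d \<Rightarrow> real" where
  "yS Mh \<alpha> \<kappa> a x =
    (let r = infnorm (x - center \<kappa> a) in
      if r \<le> 3 * gamma (a + 1) then Mh * (5 powr \<alpha> - 3 powr \<alpha>) * gamma (a + 1) powr \<alpha>
      else if r \<le> 5 * gamma (a + 1) then Mh * 5 powr \<alpha> * gamma (a + 1) powr \<alpha> - Mh * r powr \<alpha>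
      else 0)"

definition yD :: "real \<Rightarrow> real \<Rightarrow> ('d::finite \<Rightarrow> nat) \<Rightarrow> nat \<Rightarrow> real^'d \<Rightarrow> real" where
  "yD Mh \<alpha> \<kappa> a x =
    (let r = infnorm (x - center \<kappa> a) in
      if r \<le> gamma a then Mh * gamma a powr \<alpha> - Mh * r powr \<alpha> else 0)"

definition yC :: "real \<Rightarrow> real \<Rightarrow> nat \<Rightarrow> ('d::finite \<Rightarrow> nat) \<Rightarrow> real^'d \<Rightarrow> real" where
  "yC Mh \<alpha> ab \<kappa> x =
     yD Mh \<alpha> \<kappa> ab x + (\<Sum>l\<in>{1..ab - 1}. yS Mh \<alpha> (piter l \<kappa> ab) (ab - l) x)
     + yS Mh \<alpha> (\<lambda>_. 1) 0 x"

definition noise :: "real \<Rightarrow> real measure" where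
  "noise s2 = (if s2 = 0 then return borel 0 else density lborel (normal_density 0 (sqrt s2)))"

text \<open>History after t queries, as an extensional function on {..<t} of
  (query point, noisy observation). st t h u is the rule producing x_(t+1)
  from the history h of length t and the random vector u = U_(t+1).\<close>
primrec hist :: "(nat \<Rightarrow> (nat \<Rightarrow> 'a \<times> real) \<Rightarrow> 'u \<Rightarrow> 'a) \<Rightarrow> ('a \<Rightarrow> real)
    \<Rightarrow> (nat \<Rightarrow> 'u) \<Rightarrow> (nat \<Rightarrow> real) \<Rightarrow> nat \<Rightarrow> (nat \<Rightarrow> 'a \<times> real)" where
  "hist st y us es 0 = (\<lambda>_. undefined)"
| "hist st y us es (Suc t) =
     (let h = hist st y us es t; x = st t h (us t) in h(t := (x, y x + es t)))"

text \<open>An admissible algorithm: for every budget n, rules step n t (t < n) for the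
  queries, an output rule out n, distributions Um n t of the random vectors
  U_(t+1) and Us n of U_n^* (random vectors are modelled as real sequences,
  which contain every finite-dimensional random vector).  All U's and the noise
  are independent (product measure in exp_regret).\<close>
definition admissible ::
  "(nat \<Rightarrow> nat \<Rightarrow> (nat \<Rightarrow> (real^'d) \<times> real) \<Rightarrow> (nat \<Rightarrow> real) \<Rightarrow> real^'d)
   \<Rightarrow> (nat \<Rightarrow> (nat \<Rightarrow> (real^'d) \<times> real) \<Rightarrow> (nat \<Rightarrow> real) \<Rightarrow> real^'d)
   \<Rightarrow> (nat \<Rightarrow> nat \<Rightarrow> (nat \<Rightarrow> real) measure) \<Rightarrow> (nat \<Rightarrow> (nat \<Rightarrow> real) measure) \<Rightarrow> bool" where
  "admissible step out Um Us \<longleftrightarrow> (\<forall>n\<ge>1.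
      (\<forall>t<n. prob_space (Um n t) \<and> sets (Um n t) = sets borel)
    \<and> prob_space (Us n) \<and> sets (Us n) = sets borel
    \<and> (\<forall>t<n. (\<lambda>(h, u). step n t h u)
          \<in> (PiM {..<t} (\<lambda>_. borel) \<Otimes>\<^sub>M borel) \<rightarrow>\<^sub>M borel)
    \<and> (\<forall>t<n. \<forall>h u. step n t h u \<in> unit_cube)
    \<and> (\<lambda>(h, u). out n h u) \<in> (PiM {..<n} (\<lambda>_. borel) \<Otimes>\<^sub>M borel) \<rightarrow>\<^sub>M borel
    \<and> (\<forall>h u. out n h u \<in> (\<lambda>i. fst (h i)) ` {..<n}))"

definition opt :: "(real^'d \<Rightarrow> real) \<Rightarrow> real" where
  "opt y = (SUP x\<in>unit_cube. y x)"

text \<open>E[y(x^*) - y(hat x_n^*)] for budget n, objective y, noise variance s2.\<close>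
definition exp_regret ::
  "(nat \<Rightarrow> nat \<Rightarrow> (nat \<Rightarrow> (real^'d) \<times> real) \<Rightarrow> (nat \<Rightarrow> real) \<Rightarrow> real^'d)
   \<Rightarrow> (nat \<Rightarrow> (nat \<Rightarrow> (real^'d) \<times> real) \<Rightarrow> (nat \<Rightarrow> real) \<Rightarrow> real^'d)
   \<Rightarrow> (nat \<Rightarrow> nat \<Rightarrow> (nat \<Rightarrow> real) measure) \<Rightarrow> (nat \<Rightarrow> (nat \<Rightarrow> real) measure)
   \<Rightarrow> real \<Rightarrow> nat \<Rightarrow> (real^'d \<Rightarrow> real) \<Rightarrow> real" where
  "exp_regret step out Um Us s2 n y =
     (\<integral>\<omega>. opt y - y (out n (hist (step n) y (fst (fst \<omega>)) (snd \<omega>) n) (snd (fst \<omega>)))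
        \<partial>((PiM {..<n} (Um n) \<Otimes>\<^sub>M Us n) \<Otimes>\<^sub>M PiM {..<n} (\<lambda>_. noise s2)))"

end

theory Submission
  imports Defs
begin

text \<open>The problems of the class are indexed by digit paths w \<in> {0,1,2}^(d \<times> A), A = abar:
  following w from the unit cube selects nested cells Z_1 \<supset> ... \<supset> Z_A shrinking by the factor 5,
  and y_C takes its maximum only in Z_A, with a gap of Mhat \<gamma>_A^\<alpha> everywhere outside.
  An objective reveals its level-a digit only to queries inside the level-a cell, so for fixed
  randomisation and noise the run is determined by the times at which the nested cells are first
  visited.  Hence n queries can reach the deepest cell of at most C(n + A - 1, A) paths, which by
  the choice of A is at most half of the 3^(dA) paths.  Averaging over the paths, some problem has
  expected regret at least Mhat \<gamma>_A^\<alpha> / 2, and \<gamma>_A decays like 5^(-4n).\<close>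

lemma infnorm_cart_Max: "infnorm (v::real^'n) = Max (range (\<lambda>i. \<bar>v$i\<bar>))"
proof -
  have "{\<bar>v$i\<bar> |i. i \<in> UNIV} = range (\<lambda>i. \<bar>v$i\<bar>)" by auto
  then show ?thesis unfolding infnorm_cart by (simp add: cSup_eq_Max)
qed

lemma infnorm_cart_le_iff: "infnorm (v::real^'n) \<le> r \<longleftrightarrow> (\<forall>i. \<bar>v$i\<bar> \<le> r)"
  unfolding infnorm_cart_Max by (subst Max_le_iff) auto

lemma infnorm_cart_less_iff: "infnorm (v::real^'n) < r \<longleftrightarrow> (\<forall>i. \<bar>v$i\<bar> < r)"
  unfolding infnorm_cart_Max by (subst Max_less_iff) auto

lemma gamma_pos: "gamma a > 0"
  by (simp add: gamma_def)

lemma gamma_Suc: "gamma a = 5 * gamma (Suc a)"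
  by (simp add: gamma_def)

lemma gamma_antimono: "b \<le> a \<Longrightarrow> gamma a \<le> gamma b"
  by (simp add: gamma_def frac_le power_increasing)

lemma center_in_unit_cube:
  assumes "\<kappa> \<in> idx a"
  shows "center \<kappa> a \<in> unit_cube"
proof -
  have "0 \<le> center \<kappa> a $ i \<and> center \<kappa> a $ i \<le> 1" for i
  proof -
    have "1 \<le> \<kappa> i" "\<kappa> i \<le> 5 ^ a"
      using assms by (auto simp: idx_def)
    then have "1 \<le> real (\<kappa> i)" "real (\<kappa> i) \<le> 5 ^ a"
      by (metis of_nat_1 of_nat_le_iff, metis of_nat_le_iff of_nat_numeral of_nat_power)
    then have "0 \<le> 2 * real (\<kappa> i) - 1" "2 * real (\<kappa> i) - 1 \<le> 2 * 5 ^ a"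
      by linarith+
    moreover have "center \<kappa> a $ i = (2 * real (\<kappa> i) - 1) / (2 * 5 ^ a)"
      by (simp add: center_def gamma_def)
    ultimately show ?thesis by (simp add: divide_le_eq_1_pos)
  qed
  then show ?thesis by (simp add: unit_cube_def)
qed

subsection \<open>Digit paths\<close>

text \<open>Along coordinate i the children of a level-a index \<kappa> are 5\<kappa>_i - 4 + j, j = 0..4; the
  digit w (a+1) i = j - 1 \<in> {0,1,2} selects one of the three middle children, which are exactly
  those whose centre lies within 2\<gamma>_(a+1) of the parent's centre.\<close>
fun path_index :: "(nat \<Rightarrow> 'd \<Rightarrow> nat) \<Rightarrow> nat \<Rightarrow> ('d::finite \<Rightarrow> nat)" where
  "path_index w 0 = (\<lambda>_. 1)"
| "path_index w (Suc a) = (\<lambda>i. 5 * path_index w a i - 3 + w (Suc a) i)"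

abbreviation bounded_digits :: "nat \<Rightarrow> (nat \<Rightarrow> 'd \<Rightarrow> nat) \<Rightarrow> bool" where
  "bounded_digits a w \<equiv> \<forall>b\<in>{1..a}. \<forall>i. w b i \<le> 2"

abbreviation path_center :: "(nat \<Rightarrow> 'd \<Rightarrow> nat) \<Rightarrow> nat \<Rightarrow> real^'d::finite" where
  "path_center w a \<equiv> center (path_index w a) a"

lemma path_index_ge_1: "path_index w a i \<ge> 1"
  by (induction a) auto

lemma path_index_le: "bounded_digits a w \<Longrightarrow> path_index w a i \<le> 5 ^ a"
proof (induction a)
  case (Suc a)
  then have "path_index w a i \<le> 5 ^ a" "w (Suc a) i \<le> 2" by auto
  then show ?case using path_index_ge_1[of w a i] by simp
qed simp

lemma path_index_in_idx: "bounded_digits a w \<Longrightarrow> path_index w a \<in> idx a"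
  using path_index_ge_1 path_index_le unfolding idx_def by blast

lemma path_index_cong: "(\<forall>c\<in>{1..a}. w c = w' c) \<Longrightarrow> path_index w a = path_index w' a"
  by (induction a) auto

lemma path_center_Suc:
  "path_center w (Suc a) $ i = path_center w a $ i + 2 * gamma (Suc a) * (real (w (Suc a) i) - 1)"
proof -
  have "real (5 * path_index w a i - 3 + w (Suc a) i)
      = 5 * real (path_index w a i) - 3 + real (w (Suc a) i)"
    using path_index_ge_1[of w a i] by (simp add: of_nat_diff)
  then show ?thesis by (simp add: center_def gamma_Suc[of a] algebra_simps)
qed

lemma path_center_step:
  assumes "w (Suc a) i \<le> 2"
  shows "\<bar>path_center w (Suc a) $ i - path_center w a $ i\<bar> \<le> 2 * gamma (Suc a)"
proof -
  have "\<bar>real (w (Suc a) i) - 1\<bar> \<le> 1" using assms by auto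
  then show ?thesis
    unfolding path_center_Suc using gamma_pos[of "Suc a"] by (simp add: abs_mult mult_left_le)
qed

text \<open>The steps 2\<gamma>_c shrink geometrically with ratio 1/5, so they sum to at most
  (5/2)(\<gamma>_(b+1) - \<gamma>_(a+1)).\<close>
lemma path_center_dist:
  assumes "b \<le> a" and "bounded_digits a w"
  shows "\<bar>path_center w a $ i - path_center w b $ i\<bar> \<le> 5/2 * gamma (Suc b) - 5/2 * gamma (Suc a)"
  using assms
proof (induction a)
  case (Suc a)
  show ?case
  proof (cases "b = Suc a")
    case False
    then have "\<bar>path_center w a $ i - path_center w b $ i\<bar> \<le> 5/2 * gamma (Suc b) - 5/2 * gamma (Suc a)"
      using Suc by auto
    moreover have "\<bar>path_center w (Suc a) $ i - path_center w a $ i\<bar> \<le> 2 * gamma (Suc a)"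
      using Suc.prems by (intro path_center_step) auto
    ultimately show ?thesis using gamma_Suc[of "Suc a"] by linarith
  qed simp
qed simp

lemma parent_path_index:
  assumes "bounded_digits (Suc a) w"
  shows "parent (path_index w (Suc a)) (Suc a) = path_index w a"
proof -
  have step: "\<bar>path_center w (Suc a) $ i - path_center w a $ i\<bar> \<le> 2 * gamma (Suc a)" for i
    using assms by (intro path_center_step) auto
  have idx_Suc: "path_index w (Suc a) \<in> idx (Suc a)"
    using assms by (rule path_index_in_idx)
  have sub: "cell (path_index w (Suc a)) (Suc a) \<subseteq> cell (path_index w a) a"
  proof
    fix x assume "x \<in> cell (path_index w (Suc a)) (Suc a)"
    then have "x \<in> unit_cube" and "\<forall>i. \<bar>(x - path_center w (Suc a)) $ i\<bar> < gamma (Suc a)"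
      by (auto simp: cell_def infnorm_cart_less_iff)
    moreover have "\<bar>(x - path_center w a) $ i\<bar> < gamma a" if "\<bar>(x - path_center w (Suc a)) $ i\<bar> < gamma (Suc a)" for i
      using that step[of i] gamma_Suc[of a] by simp
    ultimately show "x \<in> cell (path_index w a) a"
      by (simp add: cell_def infnorm_cart_less_iff)
  qed
  text \<open>Any level-a cell containing the child cell contains its centre, hence has its centre
    within 7\<gamma>_(a+1) < 10\<gamma>_(a+1) (the spacing of level-a centres) of the parent's centre.\<close>
  have uniq: "\<kappa>' = path_index w a" if "cell (path_index w (Suc a)) (Suc a) \<subseteq> cell \<kappa>' a" for \<kappa>'
  proof
    fix i
    have "path_center w (Suc a) \<in> cell (path_index w (Suc a)) (Suc a)"
      using center_in_unit_cube[OF idx_Suc] gamma_pos[of "Suc a"] by (simp add: cell_def infnorm_0)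
    then have "path_center w (Suc a) \<in> cell \<kappa>' a"
      using that by blast
    then have "\<bar>path_center w (Suc a) $ i - center \<kappa>' a $ i\<bar> < gamma a"
      by (auto simp: cell_def infnorm_cart_less_iff)
    then have "\<bar>path_center w a $ i - center \<kappa>' a $ i\<bar> < 7 * gamma (Suc a)"
      using step[of i] gamma_Suc[of a] by linarith
    moreover have "path_center w a $ i - center \<kappa>' a $ i
        = 10 * (real (path_index w a i) - real (\<kappa>' i)) * gamma (Suc a)"
      by (simp add: center_def gamma_Suc[of a] algebra_simps)
    ultimately have "\<bar>real (path_index w a i) - real (\<kappa>' i)\<bar> < 1"
      using gamma_pos[of "Suc a"] by (simp add: abs_mult)
    then show "\<kappa>' i = path_index w a i" by linarith
  qed
  have "path_index w a \<in> idx a"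
    using assms by (intro path_index_in_idx) auto
  then show ?thesis
    unfolding parent_def diff_Suc_1 using sub uniq by (intro the_equality) blast+
qed

lemma path_index_in_Uidx: "bounded_digits a w \<Longrightarrow> path_index w a \<in> Uidx a"
proof (induction a)
  case 0
  then show ?case by (simp add: fun_eq_iff)
next
  case (Suc a)
  have "\<bar>path_center w (Suc a) $ i - path_center w a $ i\<bar> \<le> 2 * gamma (Suc a)" for i
    using Suc.prems by (intro path_center_step) auto
  then have "infnorm (path_center w (Suc a) - path_center w a) \<le> 2 * gamma (Suc a)"
    by (simp add: infnorm_cart_le_iff)
  moreover have "parent (path_index w (Suc a)) (Suc a) = path_index w a"
    using Suc.prems by (rule parent_path_index)
  ultimately show ?case using Suc path_index_in_idx[OF Suc.prems] by auto
qed

lemma piter_path_index: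
  assumes "bounded_digits a w" and "l \<le> a"
  shows "piter l (path_index w a) a = path_index w (a - l)"
  using assms(2)
proof (induction l)
  case (Suc l)
  then obtain m where m: "a - l = Suc m" "a - Suc l = m"
    by (metis Suc_diff_Suc Suc_le_lessD)
  then have "bounded_digits (Suc m) w"
    using assms(1) Suc.prems by auto
  then show ?case using Suc m parent_path_index by simp
qed simp

subsection \<open>The component functions\<close>

lemma yS_eq_0_outside:
  assumes "gamma a \<le> infnorm (x - center \<kappa> a)"
  shows "yS Mh \<alpha> \<kappa> a x = 0"
proof -
  have g: "gamma (a + 1) > 0" by (rule gamma_pos)
  show ?thesis
  proof (cases "infnorm (x - center \<kappa> a) = 5 * gamma (a + 1)")
    case True
    have "(5 * gamma (a + 1)) powr \<alpha> = 5 powr \<alpha> * gamma (a + 1) powr \<alpha>"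
      using g by (simp add: powr_mult)
    then show ?thesis unfolding yS_def Let_def True using g by simp
  next
    case False
    then have "infnorm (x - center \<kappa> a) > 5 * gamma (a + 1)"
      using assms gamma_Suc[of a] by simp
    then show ?thesis unfolding yS_def Let_def using g by simp
  qed
qed

lemma yS_plateau:
  "infnorm (x - center \<kappa> a) \<le> 3 * gamma (a + 1) \<Longrightarrow>
   yS Mh \<alpha> \<kappa> a x = Mh * (5 powr \<alpha> - 3 powr \<alpha>) * gamma (a + 1) powr \<alpha>"
  unfolding yS_def Let_def by simp

lemma yS_le_plateau:
  assumes "0 \<le> \<alpha>" and "0 \<le> Mh"
  shows "yS Mh \<alpha> \<kappa> a x \<le> Mh * (5 powr \<alpha> - 3 powr \<alpha>) * gamma (a + 1) powr \<alpha>"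
proof -
  define r where "r = infnorm (x - center \<kappa> a)"
  have g: "gamma (a + 1) > 0" by (rule gamma_pos)
  have "3 powr \<alpha> \<le> (5::real) powr \<alpha>" using assms(1) by (intro powr_mono2) auto
  then have plateau_nonneg: "0 \<le> Mh * (5 powr \<alpha> - 3 powr \<alpha>) * gamma (a + 1) powr \<alpha>"
    using assms(2) by simp
  have "Mh * 5 powr \<alpha> * gamma (a + 1) powr \<alpha> - Mh * r powr \<alpha>
      \<le> Mh * (5 powr \<alpha> - 3 powr \<alpha>) * gamma (a + 1) powr \<alpha>" if "r > 3 * gamma (a + 1)"
  proof -
    have "(3 * gamma (a + 1)) powr \<alpha> \<le> r powr \<alpha>" using that g assms(1) by (intro powr_mono2) auto
    then have "Mh * (3 powr \<alpha> * gamma (a + 1) powr \<alpha>) \<le> Mh * r powr \<alpha>"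
      using g assms(2) by (simp add: powr_mult mult_left_mono)
    then show ?thesis by (simp add: algebra_simps)
  qed
  then show ?thesis unfolding yS_def Let_def r_def[symmetric] using plateau_nonneg by auto
qed

lemma yS_nonneg:
  assumes "0 \<le> \<alpha>" and "0 \<le> Mh"
  shows "0 \<le> yS Mh \<alpha> \<kappa> a x"
proof -
  define r where "r = infnorm (x - center \<kappa> a)"
  have g: "gamma (a + 1) > 0" by (rule gamma_pos)
  have "3 powr \<alpha> \<le> (5::real) powr \<alpha>" using assms(1) by (intro powr_mono2) auto
  then have plateau_nonneg: "0 \<le> Mh * (5 powr \<alpha> - 3 powr \<alpha>) * gamma (a + 1) powr \<alpha>"
    using assms(2) by simp
  have "0 \<le> Mh * 5 powr \<alpha> * gamma (a + 1) powr \<alpha> - Mh * r powr \<alpha>" if "r \<le> 5 * gamma (a + 1)"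
  proof -
    have "r powr \<alpha> \<le> (5 * gamma (a + 1)) powr \<alpha>"
      using that assms(1) by (intro powr_mono2) (auto simp: r_def infnorm_pos_le)
    then have "Mh * r powr \<alpha> \<le> Mh * (5 powr \<alpha> * gamma (a + 1) powr \<alpha>)"
      using g assms(2) by (simp add: powr_mult mult_left_mono)
    then show ?thesis by (simp add: algebra_simps)
  qed
  then show ?thesis unfolding yS_def Let_def r_def[symmetric] using plateau_nonneg by auto
qed

lemma yD_eq_0_outside: "gamma a \<le> infnorm (x - center \<kappa> a) \<Longrightarrow> yD Mh \<alpha> \<kappa> a x = 0"
  unfolding yD_def Let_def by auto

lemma yD_le: "0 \<le> Mh \<Longrightarrow> yD Mh \<alpha> \<kappa> a x \<le> Mh * gamma a powr \<alpha>"
  unfolding yD_def Let_def by auto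

lemma yD_nonneg:
  assumes "0 \<le> \<alpha>" and "0 \<le> Mh"
  shows "0 \<le> yD Mh \<alpha> \<kappa> a x"
proof -
  have "Mh * infnorm (x - center \<kappa> a) powr \<alpha> \<le> Mh * gamma a powr \<alpha>"
    if "infnorm (x - center \<kappa> a) \<le> gamma a"
    using that assms by (intro mult_left_mono powr_mono2) (auto simp: infnorm_pos_le)
  then show ?thesis unfolding yD_def Let_def by auto
qed

lemma yD_center: "yD Mh \<alpha> \<kappa> a (center \<kappa> a) = Mh * gamma a powr \<alpha>"
  unfolding yD_def Let_def using gamma_pos[of a] by (simp add: infnorm_0)

definition path_cell :: "(nat \<Rightarrow> 'd \<Rightarrow> nat) \<Rightarrow> nat \<Rightarrow> (real^'d::finite) set" where
  "path_cell w a = {x. infnorm (x - path_center w a) < gamma a}"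

definition plateau_height :: "real \<Rightarrow> real \<Rightarrow> nat \<Rightarrow> real" where
  "plateau_height Mh \<alpha> A = (\<Sum>a<A. Mh * (5 powr \<alpha> - 3 powr \<alpha>) * gamma (a + 1) powr \<alpha>)"

lemma yC_path_index:
  assumes "bounded_digits A w" and "1 \<le> A"
  shows "yC Mh \<alpha> A (path_index w A) x
    = (\<Sum>a<A. yS Mh \<alpha> (path_index w a) a x) + yD Mh \<alpha> (path_index w A) A x"
proof -
  have "(\<Sum>l\<in>{1..A - 1}. yS Mh \<alpha> (piter l (path_index w A) A) (A - l) x)
      = (\<Sum>l\<in>{1..A - 1}. yS Mh \<alpha> (path_index w (A - l)) (A - l) x)"
    using piter_path_index[OF assms(1)] by (intro sum.cong) auto
  also have "\<dots> = (\<Sum>a\<in>{1..A - 1}. yS Mh \<alpha> (path_index w a) a x)"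
    by (rule sum.reindex_bij_witness[where i="\<lambda>a. A - a" and j="\<lambda>a. A - a"]) auto
  also have "yS Mh \<alpha> (\<lambda>_. 1) 0 x + \<dots> = (\<Sum>a<A. yS Mh \<alpha> (path_index w a) a x)"
  proof -
    have "{..<A} = insert 0 {1..A - 1}" using assms(2) by auto
    then show ?thesis by simp
  qed
  finally show ?thesis unfolding yC_def by simp
qed

lemma yC_path_index_eq:
  assumes "bounded_digits A w" "bounded_digits A w'" and "1 \<le> A"
    and local: "\<forall>a\<in>{1..A}. (\<forall>c\<in>{1..a}. w c = w' c) \<or> (x \<notin> path_cell w a \<and> x \<notin> path_cell w' a)"
  shows "yC Mh \<alpha> A (path_index w A) x = yC Mh \<alpha> A (path_index w' A) x"
proof -
  have same_or_outside: "path_index w a = path_index w' a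
      \<or> (gamma a \<le> infnorm (x - path_center w a) \<and> gamma a \<le> infnorm (x - path_center w' a))"
    if "a \<in> {1..A}" for a
    using local that path_index_cong[of a w w'] by (force simp: path_cell_def not_less)
  have "yS Mh \<alpha> (path_index w a) a x = yS Mh \<alpha> (path_index w' a) a x" if "a < A" for a
  proof (cases "a = 0")
    case False
    then have "a \<in> {1..A}" using that by auto
    from same_or_outside[OF this] show ?thesis by (auto simp: yS_eq_0_outside)
  qed simp
  moreover have "yD Mh \<alpha> (path_index w A) A x = yD Mh \<alpha> (path_index w' A) A x"
    using same_or_outside[of A] assms(3) by (auto simp: yD_eq_0_outside)
  ultimately show ?thesis unfolding yC_path_index[OF assms(1,3)] yC_path_index[OF assms(2,3)] by simp
qed

lemma yC_path_index_bounds: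
  assumes "bounded_digits A w" and "1 \<le> A" and "0 \<le> \<alpha>" and "0 \<le> Mh"
  shows "0 \<le> yC Mh \<alpha> A (path_index w A) x"
    and "yC Mh \<alpha> A (path_index w A) x \<le> plateau_height Mh \<alpha> A + yD Mh \<alpha> (path_index w A) A x"
proof -
  have "(\<Sum>a<A. yS Mh \<alpha> (path_index w a) a x) \<le> plateau_height Mh \<alpha> A"
    unfolding plateau_height_def using yS_le_plateau[OF assms(3,4)] by (intro sum_mono) auto
  moreover have "0 \<le> (\<Sum>a<A. yS Mh \<alpha> (path_index w a) a x)"
    using yS_nonneg[OF assms(3,4)] by (intro sum_nonneg) auto
  moreover have "0 \<le> yD Mh \<alpha> (path_index w A) A x" using yD_nonneg[OF assms(3,4)] by auto
  ultimately show "0 \<le> yC Mh \<alpha> A (path_index w A) x"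
    and "yC Mh \<alpha> A (path_index w A) x \<le> plateau_height Mh \<alpha> A + yD Mh \<alpha> (path_index w A) A x"
    unfolding yC_path_index[OF assms(1,2)] by simp_all
qed

text \<open>The centre of the deepest cell lies on the plateau of every ancestor bump.\<close>
lemma yC_path_index_at_center:
  assumes "bounded_digits A w" and "1 \<le> A"
  shows "yC Mh \<alpha> A (path_index w A) (path_center w A) = plateau_height Mh \<alpha> A + Mh * gamma A powr \<alpha>"
proof -
  have "yS Mh \<alpha> (path_index w a) a (path_center w A)
      = Mh * (5 powr \<alpha> - 3 powr \<alpha>) * gamma (a + 1) powr \<alpha>" if "a < A" for a
  proof (rule yS_plateau)
    have "\<bar>(path_center w A - path_center w a) $ i\<bar> \<le> 3 * gamma (a + 1)" for i
      using path_center_dist[of a A w i] that assms(1) gamma_pos[of "Suc A"] by auto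
    then show "infnorm (path_center w A - center (path_index w a) a) \<le> 3 * gamma (a + 1)"
      by (simp add: infnorm_cart_le_iff)
  qed
  then show ?thesis unfolding yC_path_index[OF assms] plateau_height_def yD_center by simp
qed

lemma opt_yC_path_index:
  assumes "bounded_digits A w" and "1 \<le> A" and "0 \<le> \<alpha>" and "0 \<le> Mh"
  shows "opt (yC Mh \<alpha> A (path_index w A)) = plateau_height Mh \<alpha> A + Mh * gamma A powr \<alpha>"
proof -
  let ?y = "yC Mh \<alpha> A (path_index w A)"
  let ?top = "plateau_height Mh \<alpha> A + Mh * gamma A powr \<alpha>"
  have center: "path_center w A \<in> unit_cube"
    using center_in_unit_cube path_index_in_idx[OF assms(1)] by blast
  have bound: "?y x \<le> ?top" for x
    using yC_path_index_bounds(2)[OF assms, of x] yD_le[OF assms(4), of \<alpha> "path_index w A" A x]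
    by simp
  have "opt ?y \<le> ?top"
    unfolding opt_def using center bound by (intro cSUP_least) auto
  moreover have "?y (path_center w A) \<le> opt ?y"
    unfolding opt_def using center bound by (intro cSUP_upper bdd_aboveI2) auto
  ultimately show ?thesis using yC_path_index_at_center[OF assms(1,2)] by simp
qed

lemma regret_path_index_bounds:
  assumes "bounded_digits A w" and "1 \<le> A" and "0 \<le> \<alpha>" and "0 \<le> Mh"
  defines "y \<equiv> yC Mh \<alpha> A (path_index w A)"
  shows "0 \<le> opt y - y x"
    and "opt y - y x \<le> plateau_height Mh \<alpha> A + Mh * gamma A powr \<alpha>"
    and "x \<notin> path_cell w A \<Longrightarrow> Mh * gamma A powr \<alpha> \<le> opt y - y x"
proof -
  have y: "0 \<le> y x" "y x \<le> plateau_height Mh \<alpha> A + yD Mh \<alpha> (path_index w A) A x"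
    unfolding y_def using yC_path_index_bounds[OF assms(1-4)] by auto
  have "yD Mh \<alpha> (path_index w A) A x \<le> Mh * gamma A powr \<alpha>"
    using yD_le[OF assms(4)] by auto
  then show "0 \<le> opt y - y x" and "opt y - y x \<le> plateau_height Mh \<alpha> A + Mh * gamma A powr \<alpha>"
    unfolding y_def opt_yC_path_index[OF assms(1-4)] using y by (simp_all add: y_def)
  assume "x \<notin> path_cell w A"
  then have "yD Mh \<alpha> (path_index w A) A x = 0"
    by (intro yD_eq_0_outside) (simp add: path_cell_def not_less)
  then show "Mh * gamma A powr \<alpha> \<le> opt y - y x"
    unfolding y_def opt_yC_path_index[OF assms(1-4)] using y by (simp add: y_def)
qed

subsection \<open>Counting the paths an algorithm can find\<close>

lemma hist_undefined: "t \<le> i \<Longrightarrow> hist st y us es t i = undefined"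
  by (induction t) (auto simp: Let_def)

lemma hist_nth:
  "i < t \<Longrightarrow> hist st y us es t i =
     (st i (hist st y us es i) (us i), y (st i (hist st y us es i) (us i)) + es i)"
proof (induction t)
  case (Suc t)
  then show ?case by (cases "i = t") (auto simp: Let_def)
qed simp

text \<open>Stars and bars: s \<mapsto> {F s a + a | a \<in> {1..A}} encodes a nondecreasing sequence
  F s : {1..A} \<rightarrow> {0..<n} as an A-element subset of {1..n + A - 1}.\<close>
lemma card_le_choose_if_inj_mono:
  assumes inj: "\<And>s s'. s \<in> S \<Longrightarrow> s' \<in> S \<Longrightarrow> (\<forall>a\<in>{1..A}. F s a = F s' a) \<Longrightarrow> s = s'"
    and mono: "\<And>s a b. s \<in> S \<Longrightarrow> 1 \<le> a \<Longrightarrow> a \<le> b \<Longrightarrow> b \<le> A \<Longrightarrow> F s a \<le> F s b"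
    and bound: "\<And>s a. s \<in> S \<Longrightarrow> a \<in> {1..A} \<Longrightarrow> F s a < n"
  shows "card S \<le> (n + A - 1) choose A"
proof -
  define E where "E s = (\<lambda>a. F s a + a) ` {1..A}" for s
  define L where "L s = map (\<lambda>a. F s a + a) [1..<A+1]" for s
  have strict: "F s a + a < F s b + b" if "s \<in> S" "a \<in> {1..A}" "b \<in> {1..A}" "a < b" for s a b
    using mono[of s a b] that by auto
  have sorted: "sorted_wrt (<) (L s)" if "s \<in> S" for s
    unfolding L_def sorted_wrt_map
    by (rule sorted_wrt_mono_rel[OF _ sorted_wrt_upt]) (use strict[OF that] in auto)
  have "set [1..<A+1] = {1..A}" by auto
  then have set_L: "set (L s) = E s" for s
    unfolding L_def E_def by simp
  have "inj_on E S"
  proof (rule inj_onI)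
    fix s s' assume s: "s \<in> S" "s' \<in> S" and "E s = E s'"
    then have "set (L s) = set (L s')" by (simp add: set_L)
    then have "L s = L s'"
      using sorted[OF s(1)] sorted[OF s(2)] by (simp add: strict_sorted_equal)
    then show "s = s'" by (intro inj s) (auto simp: L_def)
  qed
  then have "card S = card (E ` S)" by (simp add: card_image)
  also have "\<dots> \<le> card {B. B \<subseteq> {1..n + A - 1} \<and> card B = A}"
  proof (intro card_mono image_subsetI CollectI conjI)
    show "finite {B. B \<subseteq> {1..n + A - 1} \<and> card B = A}" by simp
    fix s assume s: "s \<in> S"
    show "E s \<subseteq> {1..n + A - 1}"
      unfolding E_def
    proof (rule image_subsetI)
      fix a assume "a \<in> {1..A}"
      with bound[OF s this] show "F s a + a \<in> {1..n + A - 1}" by auto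
    qed
    have "distinct (L s)" using sorted[OF s] by (simp add: strict_sorted_iff)
    then have "card (set (L s)) = length (L s)" by (rule distinct_card)
    moreover have "length (L s) = A" by (simp add: L_def)
    ultimately show "card (E s) = A" by (simp only: set_L)
  qed
  also have "\<dots> = (n + A - 1) choose A" by (simp add: n_subsets)
  finally show ?thesis .
qed

locale nested_cells =
  fixes T :: "(nat \<Rightarrow> 'e) set" and A :: nat
    and Q :: "(nat \<Rightarrow> 'e) \<Rightarrow> nat \<Rightarrow> 'a set"
    and Y :: "(nat \<Rightarrow> 'e) \<Rightarrow> 'a \<Rightarrow> real"
  assumes nested: "\<And>w x a b. w \<in> T \<Longrightarrow> x \<in> Q w a \<Longrightarrow> 1 \<le> b \<Longrightarrow> b \<le> a \<Longrightarrow> a \<le> A \<Longrightarrow> x \<in> Q w b"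
    and siblings_disjoint: "\<And>w w' b. w \<in> T \<Longrightarrow> w' \<in> T \<Longrightarrow> b \<in> {1..A} \<Longrightarrow>
      (\<forall>c\<in>{1..<b}. w c = w' c) \<Longrightarrow> w b \<noteq> w' b \<Longrightarrow> Q w b \<inter> Q w' b = {}"
    and Y_local: "\<And>w w' x. w \<in> T \<Longrightarrow> w' \<in> T \<Longrightarrow>
      (\<forall>a\<in>{1..A}. (\<forall>c\<in>{1..a}. w c = w' c) \<or> (x \<notin> Q w a \<and> x \<notin> Q w' a)) \<Longrightarrow> Y w x = Y w' x"
    and determined: "\<And>w w'. w \<in> T \<Longrightarrow> w' \<in> T \<Longrightarrow> (\<forall>c\<in>{1..A}. w c = w' c) \<Longrightarrow> w = w'"

locale nested_cells_run = nested_cells T A Q Y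
  for T :: "(nat \<Rightarrow> 'e) set" and A :: nat
    and Q :: "(nat \<Rightarrow> 'e) \<Rightarrow> nat \<Rightarrow> 'a set"
    and Y :: "(nat \<Rightarrow> 'e) \<Rightarrow> 'a \<Rightarrow> real" +
  fixes st :: "nat \<Rightarrow> (nat \<Rightarrow> 'a \<times> real) \<Rightarrow> 'u \<Rightarrow> 'a" and us :: "nat \<Rightarrow> 'u" and es :: "nat \<Rightarrow> real"
begin

definition query :: "(nat \<Rightarrow> 'e) \<Rightarrow> nat \<Rightarrow> 'a" where
  "query w t = st t (hist st (Y w) us es t) (us t)"

definition first_visit :: "(nat \<Rightarrow> 'e) \<Rightarrow> nat \<Rightarrow> nat" where
  "first_visit w a = (LEAST t. query w t \<in> Q w a)"

definition visitors :: "nat \<Rightarrow> (nat \<Rightarrow> 'e) set" where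
  "visitors n = {w \<in> T. \<exists>t<n. query w t \<in> Q w A}"

lemma first_visit_le: "query w t \<in> Q w a \<Longrightarrow> first_visit w a \<le> t"
  unfolding first_visit_def by (rule Least_le)

lemma first_visit_less:
  assumes "w \<in> visitors n" and "a \<in> {1..A}"
  shows "first_visit w a < n" and "query w (first_visit w a) \<in> Q w a"
proof -
  obtain t where "t < n" "query w t \<in> Q w A" "w \<in> T"
    using assms(1) by (auto simp: visitors_def)
  moreover from this have visit: "query w t \<in> Q w a"
    using assms(2) by (auto intro: nested)
  ultimately show "first_visit w a < n"
    using first_visit_le[OF visit] by simp
  show "query w (first_visit w a) \<in> Q w a"
    unfolding first_visit_def using visit by (rule LeastI)
qed

lemma first_visit_mono:
  assumes "w \<in> visitors n" and "1 \<le> b" "b \<le> a" "a \<le> A"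
  shows "first_visit w b \<le> first_visit w a"
  using assms first_visit_less(2)[of w n a] nested[of w _ a b]
  by (auto simp: visitors_def intro: first_visit_le)

context
  fixes n w w'
  assumes visitors: "w \<in> visitors n" "w' \<in> visitors n"
    and same_visits: "\<forall>a\<in>{1..A}. first_visit w a = first_visit w' a"
begin

text \<open>At the least level a with w a \<noteq> w' a that is first visited at time t, the common query at
  time t would lie in the two sibling cells of level a, which are disjoint.\<close>
lemma digits_agree_upto:
  assumes query_eq: "query w t = query w' t"
    and before: "\<forall>a\<in>{1..A}. first_visit w a < t \<longrightarrow> w a = w' a"
  shows "a \<in> {1..A} \<Longrightarrow> first_visit w a \<le> t \<Longrightarrow> w a = w' a"
proof (induction a rule: less_induct)
  case (less a)
  show ?case
  proof (rule ccontr)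
    assume differ: "w a \<noteq> w' a"
    have "\<forall>c\<in>{1..<a}. w c = w' c"
    proof
      fix c assume c: "c \<in> {1..<a}"
      then have "first_visit w c \<le> t"
        using first_visit_mono[OF visitors(1), of c a] less.prems by auto
      then show "w c = w' c" using c less.prems by (intro less.IH) auto
    qed
    moreover have "first_visit w a = t" using before less.prems differ by fastforce
    then have "query w t \<in> Q w a \<inter> Q w' a"
      using first_visit_less(2)[OF visitors(1) less.prems(1)]
        first_visit_less(2)[OF visitors(2) less.prems(1)] same_visits less.prems(1) query_eq
      by auto
    ultimately show False
      using siblings_disjoint[of w w' a] less.prems(1) differ visitors by (auto simp: visitors_def)
  qed
qed

lemma Y_agree_at_query:
  assumes query_eq: "query w t = query w' t"
    and visited: "\<forall>a\<in>{1..A}. first_visit w a \<le> t \<longrightarrow> w a = w' a"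
  shows "Y w (query w t) = Y w' (query w t)"
proof (rule Y_local)
  show "w \<in> T" "w' \<in> T" using visitors by (auto simp: visitors_def)
  show "\<forall>a\<in>{1..A}. (\<forall>c\<in>{1..a}. w c = w' c) \<or> (query w t \<notin> Q w a \<and> query w t \<notin> Q w' a)"
  proof
    fix a assume a: "a \<in> {1..A}"
    show "(\<forall>c\<in>{1..a}. w c = w' c) \<or> (query w t \<notin> Q w a \<and> query w t \<notin> Q w' a)"
    proof (cases "\<forall>c\<in>{1..a}. first_visit w c \<le> t")
      case True
      then show ?thesis using visited a by auto
    next
      case False
      then obtain c where c: "c \<in> {1..a}" "t < first_visit w c" by (auto simp: not_le)
      then have "query w t \<notin> Q w c" "query w t \<notin> Q w' c"
        using first_visit_le[of w t c] first_visit_le[of w' t c] same_visits a query_eq by auto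
      then show ?thesis
        using c a \<open>w \<in> T\<close> \<open>w' \<in> T\<close> nested[of w _ a c] nested[of w' _ a c] by auto
    qed
  qed
qed

lemma hist_agree:
  "t \<le> n \<Longrightarrow> hist st (Y w) us es t = hist st (Y w') us es t
     \<and> (\<forall>a\<in>{1..A}. first_visit w a < t \<longrightarrow> w a = w' a)"
proof (induction t)
  case (Suc t)
  then have hist_eq: "hist st (Y w) us es t = hist st (Y w') us es t"
    and before: "\<forall>a\<in>{1..A}. first_visit w a < t \<longrightarrow> w a = w' a" by auto
  have query_eq: "query w t = query w' t" unfolding query_def hist_eq ..
  have visited: "\<forall>a\<in>{1..A}. first_visit w a \<le> t \<longrightarrow> w a = w' a"
    using digits_agree_upto[OF query_eq before] by blast
  have "Y w (query w t) = Y w' (query w t)"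
    by (rule Y_agree_at_query[OF query_eq visited])
  then have "hist st (Y w) us es (Suc t) = hist st (Y w') us es (Suc t)"
    using hist_eq query_eq by (simp add: Let_def query_def)
  then show ?case using visited by auto
qed simp

lemma eq_if_same_first_visits: "w = w'"
proof (rule determined)
  show "w \<in> T" "w' \<in> T" using visitors by (auto simp: visitors_def)
  show "\<forall>c\<in>{1..A}. w c = w' c"
    using hist_agree[of n] first_visit_less(1)[OF visitors(1)] by blast
qed

end

lemma card_visitors_le: "card (visitors n) \<le> (n + A - 1) choose A"
proof (rule card_le_choose_if_inj_mono[where F=first_visit])
  show "w = w'" if "w \<in> visitors n" "w' \<in> visitors n" "\<forall>a\<in>{1..A}. first_visit w a = first_visit w' a"
    for w w'
    using that by (rule eq_if_same_first_visits)
  show "first_visit w a \<le> first_visit w b" if "w \<in> visitors n" "1 \<le> a" "a \<le> b" "b \<le> A" for w a b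
    using that by (rule first_visit_mono)
  show "first_visit w a < n" if "w \<in> visitors n" "a \<in> {1..A}" for w a
    using that by (rule first_visit_less)
qed

end

definition digit_paths :: "nat \<Rightarrow> (nat \<Rightarrow> 'd::finite \<Rightarrow> nat) set" where
  "digit_paths A = PiE {1..A} (\<lambda>_. PiE UNIV (\<lambda>_. {0..2}))"

lemma digit_paths_bounded: "w \<in> digit_paths A \<Longrightarrow> bounded_digits A w"
  unfolding digit_paths_def by (auto simp: PiE_iff)

lemma finite_digit_paths: "finite (digit_paths A)"
  unfolding digit_paths_def by (intro finite_PiE) auto

lemma card_digit_paths: "card (digit_paths A :: (nat \<Rightarrow> 'd::finite \<Rightarrow> nat) set) = 3 ^ (CARD('d) * A)"
proof -
  have "card (PiE (UNIV::'d set) (\<lambda>_. {0..2::nat})) = 3 ^ CARD('d)"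
    by (simp add: card_PiE)
  then show ?thesis unfolding digit_paths_def by (simp add: card_PiE power_mult)
qed

lemma path_cell_mono:
  assumes "bounded_digits a w" and "1 \<le> b" "b \<le> a"
  shows "path_cell w a \<subseteq> path_cell w b"
proof
  fix x assume x: "x \<in> path_cell w a"
  have "\<bar>(x - path_center w b) $ i\<bar> < gamma b" for i
  proof -
    have "\<bar>x $ i - path_center w a $ i\<bar> < gamma a"
      using x by (simp add: path_cell_def infnorm_cart_less_iff)
    moreover have "\<bar>path_center w a $ i - path_center w b $ i\<bar> \<le> 5/2 * gamma (Suc b) - 5/2 * gamma (Suc a)"
      using path_center_dist assms by blast
    moreover have "gamma a + (5/2 * gamma (Suc b) - 5/2 * gamma (Suc a)) \<le> gamma b"
    proof (cases "a = b")
      case False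
      then have "gamma a \<le> gamma (Suc b)" using assms by (intro gamma_antimono) simp
      then show ?thesis using gamma_pos[of "Suc a"] gamma_pos[of "Suc b"] gamma_Suc[of b] by linarith
    qed simp
    ultimately show ?thesis by simp
  qed
  then show "x \<in> path_cell w b" by (simp add: path_cell_def infnorm_cart_less_iff)
qed

lemma path_cells_disjoint:
  assumes "1 \<le> b" and "\<forall>c\<in>{1..<b}. w c = w' c" and "w b \<noteq> w' b"
  shows "path_cell w b \<inter> path_cell w' b = {}"
proof -
  obtain i where i: "w b i \<noteq> w' b i" using assms(3) by auto
  obtain m where b: "b = Suc m" using assms(1) by (cases b) auto
  have "path_index w m = path_index w' m"
    using assms(2) b by (intro path_index_cong) auto
  then have "path_center w b $ i - path_center w' b $ i = 2 * gamma b * (real (w b i) - real (w' b i))"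
    unfolding b path_center_Suc by (simp add: algebra_simps)
  moreover have "1 \<le> \<bar>real (w b i) - real (w' b i)\<bar>" using i by linarith
  ultimately have "2 * gamma b \<le> \<bar>path_center w b $ i - path_center w' b $ i\<bar>"
    using gamma_pos[of b] by (simp add: abs_mult mult_le_cancel_left1)
  then show ?thesis by (auto simp: path_cell_def infnorm_cart_less_iff dest!: spec[of _ i])
qed

lemma nested_cells_digit_paths:
  "nested_cells (digit_paths A :: (nat \<Rightarrow> 'd::finite \<Rightarrow> nat) set) A path_cell
     (\<lambda>w. yC Mh \<alpha> A (path_index w A))"
proof
  show "x \<in> path_cell w b"
    if "w \<in> digit_paths A" "x \<in> path_cell w a" "1 \<le> b" "b \<le> a" "a \<le> A" for w x a b
    using that path_cell_mono[of a w b] digit_paths_bounded[of w A] by auto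
  show "path_cell w b \<inter> path_cell w' b = {}"
    if "b \<in> {1..A}" "\<forall>c\<in>{1..<b}. w c = w' c" "w b \<noteq> w' b" for w w' b
    using that by (intro path_cells_disjoint) auto
  show "yC Mh \<alpha> A (path_index w A) x = yC Mh \<alpha> A (path_index w' A) x"
    if "w \<in> digit_paths A" "w' \<in> digit_paths A"
      "\<forall>a\<in>{1..A}. (\<forall>c\<in>{1..a}. w c = w' c) \<or> (x \<notin> path_cell w a \<and> x \<notin> path_cell w' a)" for w w' x
  proof (cases "A = 0")
    case False
    then show ?thesis
      using that digit_paths_bounded[OF that(1)] digit_paths_bounded[OF that(2)]
      by (intro yC_path_index_eq) auto
  qed simp
  show "w = w'" if "w \<in> digit_paths A" "w' \<in> digit_paths A" "\<forall>c\<in>{1..A}. w c = w' c" for w w'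
    using that unfolding digit_paths_def by (intro PiE_ext) auto
qed

text \<open>The output is one of the queries, so it can lie in the deepest cell of a path only if
  that cell was visited.\<close>
lemma card_paths_output_in_cell:
  fixes st :: "nat \<Rightarrow> (nat \<Rightarrow> (real^'d::finite) \<times> real) \<Rightarrow> 'u \<Rightarrow> real^'d"
    and pick :: "(nat \<Rightarrow> (real^'d) \<times> real) \<Rightarrow> real^'d"
  assumes pick: "\<And>h. pick h \<in> (\<lambda>i. fst (h i)) ` {..<n}"
  shows "card {w \<in> (digit_paths A :: (nat \<Rightarrow> 'd \<Rightarrow> nat) set).
      pick (hist st (yC Mh \<alpha> A (path_index w A)) us es n) \<in> path_cell w A} \<le> (n + A - 1) choose A"
proof -
  interpret nested_cells_run "digit_paths A" A path_cell "\<lambda>w. yC Mh \<alpha> A (path_index w A)" st us es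
    by (rule nested_cells_run.intro[OF nested_cells_digit_paths])
  let ?h = "\<lambda>w. hist st (yC Mh \<alpha> A (path_index w A)) us es n"
  have "{w \<in> digit_paths A. pick (?h w) \<in> path_cell w A} \<subseteq> visitors n"
  proof safe
    fix w :: "nat \<Rightarrow> 'd \<Rightarrow> nat"
    assume "w \<in> digit_paths A" "pick (?h w) \<in> path_cell w A"
    moreover obtain i where "i < n" "pick (?h w) = fst (?h w i)"
      using pick[of "?h w"] by auto
    ultimately show "w \<in> visitors n"
      using hist_nth[of i n st] by (auto simp: visitors_def query_def)
  qed
  then have "card {w \<in> digit_paths A. pick (?h w) \<in> path_cell w A} \<le> card (visitors n)"
    by (intro card_mono) (auto simp: visitors_def intro: finite_subset[OF _ finite_digit_paths])
  also have "\<dots> \<le> (n + A - 1) choose A" by (rule card_visitors_le)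
  finally show ?thesis .
qed

subsection \<open>Numerical estimates\<close>

lemma pow_div_fact_le_exp:
  assumes "0 \<le> x"
  shows "x ^ k / fact k \<le> exp (x::real)"
proof -
  have "(\<Sum>n\<in>{k}. x ^ n /\<^sub>R fact n) \<le> (\<Sum>n. x ^ n /\<^sub>R fact n)"
    using assms exp_converges[of x] by (intro sum_le_suminf) (auto simp: sums_iff)
  then show ?thesis by (simp add: exp_def divide_inverse mult.commute)
qed

lemma pow_self_le_three_pow_fact: "real k ^ k \<le> 3 ^ k * fact k"
proof -
  have "real k ^ k / fact k \<le> exp (real k)" by (rule pow_div_fact_le_exp) simp
  also have "\<dots> = exp 1 ^ k" using exp_of_nat_mult[of k 1] by simp
  also have "\<dots> \<le> 3 ^ k" by (intro power_mono exp_le) simp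
  finally show ?thesis by (simp add: divide_le_eq)
qed

lemma binomial_mul_pow_self_le: "real (m choose k) * real k ^ k \<le> (3 * real m) ^ k"
proof -
  have "real ((m choose k) * fact k) \<le> real (m ^ k)"
    by (rule of_nat_mono[OF binomial_fact_pow])
  then have choose_fact: "real (m choose k) * fact k \<le> real m ^ k" by simp
  have "real (m choose k) * real k ^ k \<le> real (m choose k) * (3 ^ k * fact k)"
    by (intro mult_left_mono pow_self_le_three_pow_fact) simp
  also have "\<dots> = 3 ^ k * (real (m choose k) * fact k)" by simp
  also have "\<dots> \<le> 3 ^ k * real m ^ k" using choose_fact by (intro mult_left_mono) auto
  finally show ?thesis by (simp add: power_mult_distrib)
qed

lemma two_binomial_le_three_pow:
  assumes "4 * n \<le> A" and "1 \<le> A"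
  shows "2 * ((n + A - 1) choose A) \<le> 3 ^ A"
proof -
  have "((2::nat) ^ (n + A)) ^ 4 = 2 ^ (4 * n + 4 * A)"
    by (simp add: power_mult[symmetric] algebra_simps)
  also have "\<dots> \<le> 2 ^ (5 * A)" using assms(1) by (intro power_increasing) auto
  also have "\<dots> = 32 ^ A" by (simp add: power_mult)
  also have "\<dots> \<le> 81 ^ A" by (intro power_mono) auto
  also have "\<dots> = ((3::nat) ^ 4) ^ A" by simp
  also have "\<dots> = (3 ^ A) ^ 4" by (metis power_mult mult.commute)
  finally have "(2::nat) ^ (n + A) \<le> 3 ^ A"
    using power_mono_iff[of "(2::nat) ^ (n + A)" "3 ^ A" 4] by linarith
  moreover have "2 * ((n + A - 1) choose A) \<le> 2 * 2 ^ (n + A - 1)"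
    using binomial_le_pow2 by simp
  moreover have "2 * (2::nat) ^ (n + A - 1) = 2 ^ (n + A)"
    using assms(2) by (metis Suc_diff_1 add_gr_0 less_le_trans power_Suc zero_less_one)
  ultimately show ?thesis by simp
qed

lemma two_binomial_le_pow:
  fixes D :: real
  assumes "9 \<le> D" and "4 * real n \<le> D / 2 * real A" and "3 \<le> A"
  shows "2 * real ((n + A - 1) choose A) \<le> D ^ A"
proof -
  define m where "m = n + A - 1"
  have A: "3 \<le> real A" using assms(3) by simp
  have "3 * real m \<le> real A * (3 + 3 * D / 8)"
    using assms(2) unfolding m_def by (simp add: algebra_simps)
  also have "\<dots> \<le> real A * (17 / 24 * D)" using assms(1) A by (intro mult_left_mono) auto
  finally have "(3 * real m) ^ A \<le> (real A * (17 / 24 * D)) ^ A"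
    by (intro power_mono) auto
  also have "\<dots> = real A ^ A * ((17 / 24) ^ A * D ^ A)"
    by (simp only: power_mult_distrib)
  finally have "real (m choose A) * real A ^ A \<le> real A ^ A * ((17 / 24) ^ A * D ^ A)"
    using binomial_mul_pow_self_le[of m A] by linarith
  then have "real (m choose A) \<le> (17 / 24) ^ A * D ^ A"
    using A by (simp add: mult.commute)
  also have "\<dots> \<le> (17 / 24) ^ 3 * D ^ A"
    using assms(1,3) by (intro mult_right_mono power_decreasing) auto
  finally have "2 * real (m choose A) \<le> 2 * (17 / 24) ^ 3 * D ^ A" by simp
  also have "\<dots> \<le> 1 * D ^ A"
    using assms(1) by (intro mult_right_mono) (auto simp: eval_nat_numeral)
  finally show ?thesis unfolding m_def by simp
qed

lemma Delta_ge_1: "1 \<le> d \<Longrightarrow> 1 \<le> Delta d"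
  using power_increasing[of 1 d "3::nat"] unfolding Delta_def by simp

lemma abar_bounds:
  assumes "1 \<le> d"
  shows "3 \<le> abar d n" and "4 * real n \<le> real (Delta d) * real (abar d n)"
    and "real (abar d n) \<le> 4 * real n + 7"
proof -
  have D: "1 \<le> real (Delta d)" using Delta_ge_1[OF assms] by simp
  define q where "q = 4 * (real n + 1) / real (Delta d)"
  have q: "0 < q" "q \<le> 4 * real n + 4" "q * real (Delta d) = 4 * (real n + 1)"
    using D by (auto simp: q_def divide_le_eq)
  have ceil: "q \<le> real_of_int \<lceil>q\<rceil>" "real_of_int \<lceil>q\<rceil> \<le> q + 1"
    by (rule le_of_int_ceiling, rule of_int_ceiling_le_add_one)
  have abar: "real (abar d n) = real_of_int \<lceil>q\<rceil> + 2"
    unfolding abar_def q_def[symmetric] using q(1) ceil(1) by simp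
  show "3 \<le> abar d n" using abar ceil q(1) by linarith
  have "4 * real n \<le> real (Delta d) * q" using q(3) by (simp add: mult.commute)
  also have "\<dots> \<le> real (Delta d) * real (abar d n)"
  proof (rule mult_left_mono)
    show "q \<le> real (abar d n)" using abar ceil by linarith
  qed simp
  finally show "4 * real n \<le> real (Delta d) * real (abar d n)" .
  show "real (abar d n) \<le> 4 * real n + 7" using abar ceil q(2) by linarith
qed

text \<open>The number of problems exceeds twice the number of paths an algorithm can discover
  with n queries; this is what the choice of abar is for.\<close>
lemma two_binomial_abar_le:
  assumes "1 \<le> d"
  shows "2 * ((n + abar d n - 1) choose abar d n) \<le> 3 ^ (d * abar d n)"
proof (cases "d = 1")
  case True
  then have "Delta d = 1" by (simp add: Delta_def)
  then have "4 * n \<le> abar d n" using abar_bounds(2)[OF assms, of n] by simp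
  moreover have "1 \<le> abar d n" using abar_bounds(1)[OF assms, of n] by simp
  ultimately show ?thesis using True two_binomial_le_three_pow by simp
next
  case False
  have "real (2 * (3 ^ d div 2)) \<le> real ((3::nat) ^ d)" by (intro of_nat_mono) simp
  then have "2 * real (Delta d) \<le> 3 ^ d"
    unfolding Delta_def by (metis of_nat_mult of_nat_numeral of_nat_power)
  then have "real (Delta d) \<le> 3 ^ d / 2" by simp
  then have "4 * real n \<le> 3 ^ d / 2 * real (abar d n)"
    using abar_bounds(2)[OF assms, of n] by (meson mult_right_mono of_nat_0_le_iff order.trans)
  moreover have "(9::real) \<le> 3 ^ d"
    using False assms power_increasing[of 2 d "3::real"] by simp
  ultimately have "2 * real ((n + abar d n - 1) choose abar d n) \<le> (3 ^ d) ^ abar d n"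
    using abar_bounds(1)[OF assms] by (intro two_binomial_le_pow) auto
  then have "real (2 * ((n + abar d n - 1) choose abar d n)) \<le> real (3 ^ (d * abar d n))"
    by (simp add: power_mult)
  then show ?thesis by (simp only: of_nat_le_iff)
qed

lemma gamma_powr_ge:
  assumes "0 \<le> \<alpha>" and "real A \<le> 4 * real n + 7"
  shows "exp (- \<alpha> * (ln 2 + 7 * ln 5)) * exp (- (4 * \<alpha> * ln 5) * real n) \<le> gamma A powr \<alpha>"
proof -
  have ln_gamma: "ln (gamma A) = - ln 2 - real A * ln 5"
    unfolding gamma_def by (simp add: ln_div ln_mult ln_realpow)
  have "\<alpha> * ln (gamma A) = - \<alpha> * ln 2 - real A * (\<alpha> * ln 5)"
    unfolding ln_gamma by (simp add: algebra_simps)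
  moreover have "real A * (\<alpha> * ln 5) \<le> (4 * real n + 7) * (\<alpha> * ln 5)"
    using assms by (intro mult_right_mono) auto
  ultimately have "- \<alpha> * (ln 2 + 7 * ln 5) + - (4 * \<alpha> * ln 5) * real n \<le> \<alpha> * ln (gamma A)"
    by (simp add: algebra_simps)
  then have "exp (- \<alpha> * (ln 2 + 7 * ln 5) + - (4 * \<alpha> * ln 5) * real n) \<le> exp (\<alpha> * ln (gamma A))"
    by (simp only: exp_le_cancel_iff)
  moreover have "gamma A powr \<alpha> = exp (\<alpha> * ln (gamma A))"
    using gamma_pos[of A] by (simp add: powr_def mult.commute)
  ultimately show ?thesis by (simp only: exp_add)
qed

subsection \<open>Expected regret\<close>

lemma infnorm_diff_measurable[measurable]:
  "(\<lambda>x::real^'n. infnorm (x - c)) \<in> borel_measurable borel"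
  by (intro borel_measurable_continuous_onI continuous_intros)

lemma yC_measurable[measurable]: "yC Mh \<alpha> A \<kappa> \<in> borel_measurable borel"
  unfolding yC_def yS_def yD_def Let_def by measurable

lemma prob_space_noise: "0 \<le> s2 \<Longrightarrow> prob_space (noise s2)"
  unfolding noise_def by (auto intro: prob_space_return prob_space_normal_density)

lemma sets_noise: "sets (noise s2) = sets borel"
  unfolding noise_def by auto

lemma admissibleD:
  assumes "admissible step out Um Us" and "1 \<le> n"
  shows "t < n \<Longrightarrow> prob_space (Um n t)" and "t < n \<Longrightarrow> sets (Um n t) = sets borel"
    and "prob_space (Us n)" and "sets (Us n) = sets borel"
    and "t < n \<Longrightarrow> (\<lambda>(h, u). step n t h u) \<in> (PiM {..<t} (\<lambda>_. borel) \<Otimes>\<^sub>M borel) \<rightarrow>\<^sub>M borel"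
    and "(\<lambda>(h, u). out n h u) \<in> (PiM {..<n} (\<lambda>_. borel) \<Otimes>\<^sub>M borel) \<rightarrow>\<^sub>M borel"
    and "out n h u \<in> (\<lambda>i. fst (h i)) ` {..<n}"
  using assms unfolding admissible_def by blast+

abbreviation sample_space ::
  "(nat \<Rightarrow> nat \<Rightarrow> (nat \<Rightarrow> real) measure) \<Rightarrow> (nat \<Rightarrow> (nat \<Rightarrow> real) measure) \<Rightarrow> real \<Rightarrow> nat
   \<Rightarrow> (((nat \<Rightarrow> nat \<Rightarrow> real) \<times> (nat \<Rightarrow> real)) \<times> (nat \<Rightarrow> real)) measure" where
  "sample_space Um Us s2 n \<equiv> (PiM {..<n} (Um n) \<Otimes>\<^sub>M Us n) \<Otimes>\<^sub>M PiM {..<n} (\<lambda>_. noise s2)"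

lemma prob_space_sample_space:
  assumes "admissible step out Um Us" and "1 \<le> n" and "0 \<le> s2"
  shows "prob_space (sample_space Um Us s2 n)"
  using admissibleD(1,3)[OF assms(1,2)] prob_space_noise[OF assms(3)]
  by (intro prob_space_pair prob_space_PiM) auto

lemma hist_measurable:
  fixes st :: "nat \<Rightarrow> (nat \<Rightarrow> 'a::second_countable_topology \<times> real) \<Rightarrow> (nat \<Rightarrow> real) \<Rightarrow> 'a"
    and V :: "'v measure"
  assumes U: "\<And>t. t < n \<Longrightarrow> sets (U t) = sets borel" and N: "sets N = sets borel"
    and st: "\<And>t. t < n \<Longrightarrow> (\<lambda>(h, u). st t h u) \<in> (PiM {..<t} (\<lambda>_. borel) \<Otimes>\<^sub>M borel) \<rightarrow>\<^sub>M borel"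
    and y: "y \<in> borel_measurable borel"
  defines "\<Omega> \<equiv> (PiM {..<n} U \<Otimes>\<^sub>M V) \<Otimes>\<^sub>M PiM {..<n} (\<lambda>_. N)"
  shows "t \<le> n \<Longrightarrow> (\<lambda>\<omega>. hist st y (fst (fst \<omega>)) (snd \<omega>) t) \<in> \<Omega> \<rightarrow>\<^sub>M PiM {..<t} (\<lambda>_. borel)"
proof (induction t)
  case 0
  show ?case by (simp add: space_PiM)
next
  case (Suc t)
  let ?H = "\<lambda>\<omega>. hist st y (fst (fst \<omega>)) (snd \<omega>) t"
  let ?x = "\<lambda>\<omega>. st t (?H \<omega>) (fst (fst \<omega>) t)"
  have t: "t < n" using Suc.prems by simp
  have H: "?H \<in> \<Omega> \<rightarrow>\<^sub>M PiM {..<t} (\<lambda>_. borel)" using Suc by simp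
  have "(\<lambda>\<omega>. fst (fst \<omega>) t) \<in> \<Omega> \<rightarrow>\<^sub>M U t"
    unfolding \<Omega>_def apply measurable using t by simp
  moreover have "(\<lambda>\<omega>. snd \<omega> t) \<in> \<Omega> \<rightarrow>\<^sub>M N"
    unfolding \<Omega>_def apply measurable using t by simp
  ultimately have u: "(\<lambda>\<omega>. fst (fst \<omega>) t) \<in> borel_measurable \<Omega>" and e: "(\<lambda>\<omega>. snd \<omega> t) \<in> borel_measurable \<Omega>"
    using measurable_cong_sets[OF refl U[OF t]] measurable_cong_sets[OF refl N] by blast+
  have x: "?x \<in> borel_measurable \<Omega>"
    using measurable_compose[OF measurable_Pair[OF H u] st[OF t]] by simp
  have "(\<lambda>\<omega>. (?x \<omega>, y (?x \<omega>) + snd \<omega> t)) \<in> \<Omega> \<rightarrow>\<^sub>M borel \<Otimes>\<^sub>M borel"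
    by (intro measurable_Pair x borel_measurable_add e measurable_compose[OF x y])
  then have new: "(\<lambda>\<omega>. (?x \<omega>, y (?x \<omega>) + snd \<omega> t)) \<in> \<Omega> \<rightarrow>\<^sub>M borel"
    unfolding borel_prod .
  have "(\<lambda>\<omega> i. hist st y (fst (fst \<omega>)) (snd \<omega>) (Suc t) i) \<in> \<Omega> \<rightarrow>\<^sub>M PiM {..<Suc t} (\<lambda>_. borel)"
  proof (rule measurable_PiM_single')
    fix i assume "i \<in> {..<Suc t}"
    then consider "i = t" | "i \<in> {..<t}" by fastforce
    then show "(\<lambda>\<omega>. hist st y (fst (fst \<omega>)) (snd \<omega>) (Suc t) i) \<in> borel_measurable \<Omega>"
    proof cases
      case 1
      then show ?thesis using new by (simp add: Let_def)
    next
      case 2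
      then show ?thesis
        using measurable_compose[OF H measurable_component_singleton[of i]] by (simp add: Let_def)
    qed
  next
    show "(\<lambda>\<omega> i. hist st y (fst (fst \<omega>)) (snd \<omega>) (Suc t) i) \<in> space \<Omega> \<rightarrow> (\<Pi>\<^sub>E i\<in>{..<Suc t}. space borel)"
    proof (intro funcsetI PiE_I)
      fix \<omega> i assume "i \<notin> {..<Suc t}"
      then show "hist st y (fst (fst \<omega>)) (snd \<omega>) (Suc t) i = undefined" by (intro hist_undefined) simp
    qed simp
  qed
  then show ?case by simp
qed

lemma regret_measurable:
  fixes step :: "nat \<Rightarrow> nat \<Rightarrow> (nat \<Rightarrow> (real^'d::finite) \<times> real) \<Rightarrow> (nat \<Rightarrow> real) \<Rightarrow> real^'d"
  assumes adm: "admissible step out Um Us" and "1 \<le> n"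
    and y: "y \<in> borel_measurable borel"
  shows "(\<lambda>\<omega>. opt y - y (out n (hist (step n) y (fst (fst \<omega>)) (snd \<omega>) n) (snd (fst \<omega>))))
    \<in> borel_measurable (sample_space Um Us s2 n)"
proof -
  have H: "(\<lambda>\<omega>. hist (step n) y (fst (fst \<omega>)) (snd \<omega>) n)
      \<in> sample_space Um Us s2 n \<rightarrow>\<^sub>M PiM {..<n} (\<lambda>_. borel)"
    using admissibleD[OF adm \<open>1 \<le> n\<close>] sets_noise y by (intro hist_measurable) auto
  have "(\<lambda>\<omega>. snd (fst \<omega>)) \<in> sample_space Um Us s2 n \<rightarrow>\<^sub>M Us n" by measurable
  then have u: "(\<lambda>\<omega>. snd (fst \<omega>)) \<in> borel_measurable (sample_space Um Us s2 n)"
    using measurable_cong_sets[OF refl admissibleD(4)[OF adm \<open>1 \<le> n\<close>]] by blast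
  have "(\<lambda>\<omega>. out n (hist (step n) y (fst (fst \<omega>)) (snd \<omega>) n) (snd (fst \<omega>)))
      \<in> borel_measurable (sample_space Um Us s2 n)"
    using measurable_compose[OF measurable_Pair[OF H u] admissibleD(6)[OF adm \<open>1 \<le> n\<close>]] by simp
  then show ?thesis using y by measurable
qed

lemma (in prob_space) exists_expectation_ge_half:
  fixes c :: real and f :: "'b \<Rightarrow> 'a \<Rightarrow> real"
  assumes "finite T" and "T \<noteq> {}" and "0 \<le> c"
    and integrable: "\<And>w. w \<in> T \<Longrightarrow> integrable M (f w)"
    and nonneg: "\<And>w x. w \<in> T \<Longrightarrow> 0 \<le> f w x"
    and large: "\<And>w x. w \<in> T \<Longrightarrow> \<not> P w x \<Longrightarrow> c \<le> f w x"
    and few_exempt: "\<And>x. 2 * card {w \<in> T. P w x} \<le> card T"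
  shows "\<exists>w\<in>T. c / 2 \<le> expectation (f w)"
proof (rule ccontr)
  assume "\<not> ?thesis"
  then have "(\<Sum>w\<in>T. expectation (f w)) < (\<Sum>w\<in>T. c / 2)"
    using assms(1,2) by (intro sum_strict_mono) auto
  moreover have "c * card T / 2 \<le> (\<Sum>w\<in>T. f w x)" for x
  proof -
    have "card {w \<in> T. \<not> P w x} = card T - card {w \<in> T. P w x}"
      using assms(1) by (subst card_Diff_subset[symmetric]) (auto intro: arg_cong[where f=card])
    then have "card T \<le> 2 * card {w \<in> T. \<not> P w x}" using few_exempt[of x] by linarith
    then have card_le: "real (card T) \<le> 2 * real (card {w \<in> T. \<not> P w x})"
      by (metis of_nat_mono of_nat_mult of_nat_numeral)
    have "c * card T \<le> 2 * (c * card {w \<in> T. \<not> P w x})"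
      using mult_left_mono[OF card_le assms(3)] by (simp add: algebra_simps)
    then have "c * card T / 2 \<le> c * card {w \<in> T. \<not> P w x}" by simp
    also have "\<dots> = (\<Sum>w\<in>{w \<in> T. \<not> P w x}. c)" by simp
    also have "\<dots> = (\<Sum>w\<in>T. if \<not> P w x then c else 0)"
      using assms(1) by (rule sum.inter_filter)
    also have "\<dots> \<le> (\<Sum>w\<in>T. f w x)"
      using nonneg large by (intro sum_mono) auto
    finally show ?thesis .
  qed
  then have "c * card T / 2 \<le> expectation (\<lambda>x. \<Sum>w\<in>T. f w x)"
    using integrable by (intro integral_ge_const) auto
  ultimately show False using integrable by (simp add: Bochner_Integration.integral_sum algebra_simps)
qed

lemma exp_regret_digit_path_ge:
  fixes step :: "nat \<Rightarrow> nat \<Rightarrow> (nat \<Rightarrow> (real^'d::finite) \<times> real) \<Rightarrow> (nat \<Rightarrow> real) \<Rightarrow> real^'d"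
  assumes adm: "admissible step out Um Us" and n: "1 \<le> n" and "0 \<le> s2"
    and "0 \<le> \<alpha>" and "0 \<le> Mh" and A: "A = abar CARD('d) n"
  shows "\<exists>w\<in>digit_paths A. Mh * gamma A powr \<alpha> / 2
      \<le> exp_regret step out Um Us s2 n (yC Mh \<alpha> A (path_index w A))"
proof -
  interpret prob_space "sample_space Um Us s2 n"
    using adm n \<open>0 \<le> s2\<close> by (rule prob_space_sample_space)
  have "1 \<le> A" using abar_bounds(1)[of "CARD('d)" n] A by simp
  let ?T = "digit_paths A :: (nat \<Rightarrow> 'd \<Rightarrow> nat) set"
  define y where "y w = yC Mh \<alpha> A (path_index w A)" for w :: "nat \<Rightarrow> 'd \<Rightarrow> nat"
  define x where "x w \<omega> = out n (hist (step n) (y w) (fst (fst \<omega>)) (snd \<omega>) n) (snd (fst \<omega>))"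
    for w \<omega>
  note bounds = regret_path_index_bounds[OF digit_paths_bounded \<open>1 \<le> A\<close> \<open>0 \<le> \<alpha>\<close> \<open>0 \<le> Mh\<close>]
  have "\<exists>w\<in>digit_paths A. Mh * gamma A powr \<alpha> / 2 \<le> expectation (\<lambda>\<omega>. opt (y w) - y w (x w \<omega>))"
  proof (rule exists_expectation_ge_half[where P="\<lambda>w \<omega>. x w \<omega> \<in> path_cell w A"])
    show "finite ?T" by (rule finite_digit_paths)
    show "?T \<noteq> {}"
    proof
      assume "?T = {}"
      then show False using card_digit_paths[where 'd='d, of A] by simp
    qed
    show "integrable (sample_space Um Us s2 n) (\<lambda>\<omega>. opt (y w) - y w (x w \<omega>))"
      if "w \<in> ?T" for w
    proof (rule integrable_const_bound[where B="plateau_height Mh \<alpha> A + Mh * gamma A powr \<alpha>"])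
      have "0 \<le> opt (y w) - y w (x w \<omega>)"
        and "opt (y w) - y w (x w \<omega>) \<le> plateau_height Mh \<alpha> A + Mh * gamma A powr \<alpha>" for \<omega>
        unfolding y_def using bounds(1,2)[OF that] by blast+
      then show "AE \<omega> in sample_space Um Us s2 n.
          norm (opt (y w) - y w (x w \<omega>)) \<le> plateau_height Mh \<alpha> A + Mh * gamma A powr \<alpha>"
        by (intro AE_I2) simp
      show "(\<lambda>\<omega>. opt (y w) - y w (x w \<omega>)) \<in> borel_measurable (sample_space Um Us s2 n)"
        unfolding x_def y_def by (rule regret_measurable[OF adm n yC_measurable])
    qed
    show "2 * card {w \<in> ?T. x w \<omega> \<in> path_cell w A} \<le> card ?T" for \<omega>
    proof -
      have "card {w \<in> ?T. x w \<omega> \<in> path_cell w A} \<le> (n + A - 1) choose A"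
        unfolding x_def y_def using admissibleD(7)[OF adm n]
        by (intro card_paths_output_in_cell[where pick="\<lambda>h. out n h (snd (fst \<omega>))"])
      then show ?thesis
        using two_binomial_abar_le[of "CARD('d)" n] by (simp add: card_digit_paths A)
    qed
    show "0 \<le> Mh * gamma A powr \<alpha>" using \<open>0 \<le> Mh\<close> by simp
    show "0 \<le> opt (y w) - y w (x w \<omega>)" if "w \<in> ?T" for w \<omega>
      unfolding y_def using bounds(1)[OF that] .
    show "Mh * gamma A powr \<alpha> \<le> opt (y w) - y w (x w \<omega>)"
      if "w \<in> ?T" "x w \<omega> \<notin> path_cell w A" for w \<omega>
      using that unfolding y_def by (rule bounds(3))
  qed
  then show ?thesis by (simp add: exp_regret_def x_def y_def)
qed

lemma finite_Uidx: "finite (Uidx a :: ('d::finite \<Rightarrow> nat) set)"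
proof (cases a)
  case (Suc b)
  have "idx a = PiE (UNIV :: 'd set) (\<lambda>_. {1..5 ^ a})" by (auto simp: idx_def PiE_UNIV_domain)
  then have "finite (idx a :: ('d \<Rightarrow> nat) set)" by (simp add: finite_PiE)
  moreover have "Uidx a \<subseteq> (idx a :: ('d \<Rightarrow> nat) set)" using Suc by auto
  ultimately show ?thesis by (rule finite_subset[rotated])
qed simp

lemma sup_exp_regret_ge:
  fixes step :: "nat \<Rightarrow> nat \<Rightarrow> (nat \<Rightarrow> (real^'d::finite) \<times> real) \<Rightarrow> (nat \<Rightarrow> real) \<Rightarrow> real^'d"
  assumes adm: "admissible step out Um Us" and n: "1 \<le> n" and s2: "0 \<le> s2"
    and "0 \<le> \<alpha>" and "0 \<le> Mh"
  shows "Mh / 2 * (exp (- \<alpha> * (ln 2 + 7 * ln 5)) * exp (- (4 * \<alpha> * ln 5) * real n))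
    \<le> (SUP \<kappa> \<in> Uidx (abar CARD('d) n). exp_regret step out Um Us s2 n (yC Mh \<alpha> (abar CARD('d) n) \<kappa>))"
proof -
  let ?A = "abar CARD('d) n"
  obtain w where w: "w \<in> digit_paths ?A"
    and regret: "Mh * gamma ?A powr \<alpha> / 2 \<le> exp_regret step out Um Us s2 n (yC Mh \<alpha> ?A (path_index w ?A))"
    using exp_regret_digit_path_ge[OF adm n s2 \<open>0 \<le> \<alpha>\<close> \<open>0 \<le> Mh\<close> refl] by blast
  have "Mh / 2 * (exp (- \<alpha> * (ln 2 + 7 * ln 5)) * exp (- (4 * \<alpha> * ln 5) * real n))
      \<le> Mh / 2 * gamma ?A powr \<alpha>"
    using gamma_powr_ge[of \<alpha> ?A n] abar_bounds(3)[of "CARD('d)" n] assms(4,5)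
    by (intro mult_left_mono) auto
  also have "\<dots> \<le> exp_regret step out Um Us s2 n (yC Mh \<alpha> ?A (path_index w ?A))"
    using regret by simp
  also have "\<dots> \<le> (SUP \<kappa> \<in> Uidx ?A. exp_regret step out Um Us s2 n (yC Mh \<alpha> ?A \<kappa>))"
    using path_index_in_Uidx[OF digit_paths_bounded[OF w]] finite_Uidx
    by (intro cSUP_upper bdd_above_finite) auto
  finally show ?thesis .
qed

theorem proposition3:
  fixes \<alpha> M Mt :: real
    and step :: "nat \<Rightarrow> nat \<Rightarrow> (nat \<Rightarrow> (real^'d::finite) \<times> real) \<Rightarrow> (nat \<Rightarrow> real) \<Rightarrow> real^'d"
    and out :: "nat \<Rightarrow> (nat \<Rightarrow> (real^'d) \<times> real) \<Rightarrow> (nat \<Rightarrow> real) \<Rightarrow> real^'d"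
    and Um :: "nat \<Rightarrow> nat \<Rightarrow> (nat \<Rightarrow> real) measure"
    and Us :: "nat \<Rightarrow> (nat \<Rightarrow> real) measure"
  assumes "\<alpha> > 0" and "M > 0" and "Mt > 0"
    and "M / Mt \<ge> (1 / (1 - 5 powr (-\<alpha>))) * (1 + 1 / (5 powr \<alpha> - 3 powr \<alpha>)) * 80 powr \<alpha>"
    and "admissible step out Um Us"
  shows "\<exists>b4 > 0. \<exists>b5 > 0. \<forall>s2 \<ge> 0. \<exists>b3. \<forall>n \<ge> b3.
           (SUP \<kappa> \<in> Uidx (abar CARD('d) n).
              exp_regret step out Um Us s2 n (yC (Mhat \<alpha> Mt) \<alpha> (abar CARD('d) n) \<kappa>))
           \<ge> b4 * exp (- b5 * real n)"
proof -
  define Mh where "Mh = Mhat \<alpha> Mt"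
  have "3 powr \<alpha> < (5::real) powr \<alpha>" using assms(1) by (simp add: powr_less_mono2)
  then have Mh: "0 < Mh" using assms(3) by (simp add: Mh_def Mhat_def)
  define b4 where "b4 = Mh / 2 * exp (- \<alpha> * (ln 2 + 7 * ln 5))"
  define b5 where "b5 = 4 * \<alpha> * ln 5"
  have "b4 * exp (- b5 * real n)
      \<le> (SUP \<kappa> \<in> Uidx (abar CARD('d) n). exp_regret step out Um Us s2 n (yC Mh \<alpha> (abar CARD('d) n) \<kappa>))"
    if "0 \<le> s2" and "1 \<le> n" for s2 n
    using sup_exp_regret_ge[OF assms(5) that(2,1)] assms(1) Mh unfolding b4_def b5_def
    by (simp add: mult.assoc)
  moreover have "0 < b4" "0 < b5" unfolding b4_def b5_def using Mh assms(1) by auto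
  ultimately show ?thesis unfolding Mh_def by blast
qed

end
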